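(* Let $f\ge0$ be integrable on $[-\pi,\pi]$ with $\int f>0$ and such that $\lim_{n\to\infty}\sigma_{n+1}^2(f)/\sigma_n^2(f)=1$. Let $p_n$ be the optimal polynomial for $f$ and define $K_n(\lambda)=|p_n(e^{i\lambda})|^2f(\lambda)/\sigma_n^2(f)$. Then $K_n\ge0$, $\int_{-\pi}^{\pi}K_n(\lambda)\,d\lambda=1$, and for every $0<\delta\le\pi$, $$\lim_{n\to\infty}\int_{\delta\le|\lambda|\le\pi}K_n(\lambda)\,d\lambda=0;$$ i.e. $\{K_n\}$ is an approximate identity.
   Context: $\sigma_n^2(f)=\min_{q\in\mathcal{Q}_n(1)}\int_{-\pi}^{\pi}|q(e^{i\lambda})|^2f(\lambda)\,d\lambda$, where $\mathcal{Q}_n(1)$ is the set of complex polynomials of degree at most $n$ with $q(1)=1$; the optimal polynomial $p_n\in\mathcal{Q}_n(1)$ is the unique minimizer. *)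

theory Defs
  imports "HOL-Analysis.Analysis" "HOL-Computational_Algebra.Polynomial"
begin

definition Qn1 :: "nat \<Rightarrow> complex poly set" where
  "Qn1 n = {q. degree q \<le> n \<and> poly q 1 = 1}"

definition energy :: "(real \<Rightarrow> real) \<Rightarrow> complex poly \<Rightarrow> real" where
  "energy f q = integral {-pi..pi} (\<lambda>t. (cmod (poly q (exp (\<i> * complex_of_real t))))\<^sup>2 * f t)"

definition sigma2 :: "(real \<Rightarrow> real) \<Rightarrow> nat \<Rightarrow> real" where
  "sigma2 f n = (INF q\<in>Qn1 n. energy f q)"

definition optpoly :: "(real \<Rightarrow> real) \<Rightarrow> nat \<Rightarrow> complex poly" where
  "optpoly f n = (THE p. p \<in> Qn1 n \<and> (\<forall>q\<in>Qn1 n. energy f p \<le> energy f q))"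

definition kernel :: "(real \<Rightarrow> real) \<Rightarrow> nat \<Rightarrow> real \<Rightarrow> real" where
  "kernel f n t = (cmod (poly (optpoly f n) (exp (\<i> * complex_of_real t))))\<^sup>2 * f t / sigma2 f n"

end

(*
  The energy q |-> int |q(e^it)|^2 f is the quadratic form of a real semi-inner product on complex
  polynomials. It is definite: a nonzero q vanishes on the circle only at finitely many points,
  while int f > 0. Projecting 1 orthogonally onto the polynomials of degree <= n that vanish at 1
  (built up one real dimension at a time, as in Gram-Schmidt) yields the unique minimiser p_n;
  hence sigma_n^2 > 0 and int K_n = 1.

  For the concentration, p_n (1 + z)/2 is admissible at degree n + 1 and
  |(1 + e^it)/2|^2 = (1 + cos t)/2, so sigma_(n+1)^2 <= sigma_n^2 int K_n (1 + cos t)/2, i.e.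
  int K_n (1 - cos t)/2 <= 1 - sigma_(n+1)^2 / sigma_n^2. As (1 - cos t)/2 >= (1 - cos delta)/2 > 0
  for delta <= |t| <= pi, Markov's inequality bounds the mass of K_n there by a fixed multiple of
  1 - sigma_(n+1)^2 / sigma_n^2, which tends to 0.
*)
theory Submission
  imports Defs
begin

section \<open>Integrals against a nonnegative weight\<close>

lemma absolutely_integrable_continuous_mult:
  fixes h f :: "real \<Rightarrow> real"
  assumes h: "continuous_on {a..b} h" and f: "f absolutely_integrable_on {a..b}"
  shows "(\<lambda>t. h t * f t) absolutely_integrable_on {a..b}"
proof (rule absolutely_integrable_bounded_measurable_product_real[OF _ _ _ f])
  show "h \<in> borel_measurable (lebesgue_on {a..b})"
    by (rule continuous_imp_measurable_on_sets_lebesgue[OF h]) auto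
  show "bounded (h ` {a..b})"
    by (intro compact_imp_bounded compact_continuous_image h) auto
qed auto

lemma negligible_if_nonneg_integral_eq_0:
  fixes g :: "'a::euclidean_space \<Rightarrow> real"
  assumes g: "g absolutely_integrable_on S" and nonneg: "\<And>x. x \<in> S \<Longrightarrow> 0 \<le> g x"
    and zero: "integral S g = 0"
  shows "negligible {x \<in> S. g x \<noteq> 0}"
proof -
  have int: "integrable lebesgue (\<lambda>x. indicator S x *\<^sub>R g x)"
    using g by (simp add: set_integrable_def)
  have "integral\<^sup>L lebesgue (\<lambda>x. indicator S x *\<^sub>R g x) = 0"
    using set_lebesgue_integral_eq_integral(2)[OF g] zero by (simp add: set_lebesgue_integral_def)
  then have "AE x in lebesgue. indicator S x *\<^sub>R g x = 0"
    using integral_nonneg_eq_0_iff_AE[OF int] nonneg by (simp add: indicator_def)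
  then obtain N where "negligible N" "{x. indicator S x *\<^sub>R g x \<noteq> 0} \<subseteq> N"
    unfolding eventually_ae_filter_negligible by blast
  moreover have "{x \<in> S. g x \<noteq> 0} = {x. indicator S x *\<^sub>R g x \<noteq> 0}"
    by (auto simp: indicator_def)
  ultimately show ?thesis
    using negligible_subset by metis
qed

lemma integral_eq_0_if_weighted_integral_eq_0:
  fixes f w :: "'a::euclidean_space \<Rightarrow> real"
  assumes wf: "(\<lambda>x. w x * f x) absolutely_integrable_on S"
    and nonneg: "\<And>x. x \<in> S \<Longrightarrow> 0 \<le> w x * f x"
    and zeros: "negligible {x. w x = 0}"
    and zero: "integral S (\<lambda>x. w x * f x) = 0"
  shows "integral S f = 0"
proof -
  have "negligible ({x \<in> S. w x * f x \<noteq> 0} \<union> {x. w x = 0})"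
    using negligible_if_nonneg_integral_eq_0[OF wf nonneg zero] zeros by simp
  then have "integral S f = integral S (\<lambda>_. 0)"
    by (rule integral_spike) auto
  then show ?thesis by simp
qed

lemma markov_integral_subset_le:
  fixes g w :: "'a::euclidean_space \<Rightarrow> real"
  assumes g: "g absolutely_integrable_on S" and wg: "(\<lambda>x. w x * g x) integrable_on S"
    and T: "T \<in> sets lebesgue" "T \<subseteq> S"
    and g_nonneg: "\<And>x. x \<in> S \<Longrightarrow> 0 \<le> g x" and w_nonneg: "\<And>x. x \<in> S \<Longrightarrow> 0 \<le> w x"
    and w_ge: "\<And>x. x \<in> T \<Longrightarrow> c \<le> w x"
  shows "c * integral T g \<le> integral S (\<lambda>x. w x * g x)"
proof -
  have wg_abs: "(\<lambda>x. w x * g x) absolutely_integrable_on S"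
    using wg g_nonneg w_nonneg by (intro nonnegative_absolutely_integrable_1) auto
  have gT: "g integrable_on T" and wgT: "(\<lambda>x. w x * g x) integrable_on T"
    using set_integrable_subset[OF g T] set_integrable_subset[OF wg_abs T]
    by (auto intro: set_lebesgue_integral_eq_integral(1))
  have cgT: "(\<lambda>x. c * g x) integrable_on T"
    using integrable_on_cmult_left[OF gT, of c] by simp
  have "c * integral T g = integral T (\<lambda>x. c * g x)"
    by simp
  also have "\<dots> \<le> integral T (\<lambda>x. w x * g x)"
    using T(2) by (intro integral_le cgT wgT mult_right_mono w_ge g_nonneg) auto
  also have "\<dots> \<le> integral S (\<lambda>x. w x * g x)"
    using T(2) g_nonneg w_nonneg by (intro integral_subset_le wgT wg) auto
  finally show ?thesis .
qed

lemma tail_sets_lebesgue: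
  fixes a b \<delta> :: real
  shows "{t \<in> {a..b}. \<delta> \<le> \<bar>t\<bar>} \<in> sets lebesgue"
proof -
  have "closed {t::real. \<delta> \<le> \<bar>t\<bar>}"
    by (intro closed_Collect_le continuous_intros)
  then have "compact ({a..b} \<inter> {t. \<delta> \<le> \<bar>t\<bar>})"
    by (intro compact_Int_closed) auto
  then show ?thesis
    by (simp add: Int_def lmeasurable_compact fmeasurableD)
qed

section \<open>Zeros of polynomials on the unit circle\<close>

lemma negligible_countable:
  fixes A :: "'a::euclidean_space set"
  assumes "countable A"
  shows "negligible A"
proof -
  have "negligible (\<Union>x\<in>A. {x})"
    using assms by (intro negligible_countable_Union) auto
  then show ?thesis by simp
qed

lemma countable_cis_eq: "countable {t. cis t = z}"
proof (cases "\<exists>t0. cis t0 = z")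
  case False
  then show ?thesis by simp
next
  case True
  then obtain t0 where t0: "cis t0 = z" by blast
  have "{t. cis t = z} \<subseteq> range (\<lambda>n::int. t0 + 2 * pi * of_int n)"
  proof
    fix t assume "t \<in> {t. cis t = z}"
    then have "exp (\<i> * complex_of_real t) = exp (\<i> * complex_of_real t0)"
      using t0 by (simp flip: cis_conv_exp)
    then obtain n :: int where
      n: "\<i> * complex_of_real t = \<i> * complex_of_real t0 + (of_int (2 * n) * pi) * \<i>"
      using exp_eq by blast
    have "t = t0 + 2 * pi * of_int n"
      using arg_cong[OF n, of Im] by simp
    then show "t \<in> range (\<lambda>n::int. t0 + 2 * pi * of_int n)" by blast
  qed
  then show ?thesis by (rule countable_subset) simp
qed

lemma negligible_poly_cis_zeros:
  fixes p :: "complex poly"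
  assumes "p \<noteq> 0"
  shows "negligible {t. poly p (cis t) = 0}"
proof -
  have "{t. poly p (cis t) = 0} = (\<Union>z\<in>{z. poly p z = 0}. {t. cis t = z})"
    by auto
  also have "negligible \<dots>"
    using poly_roots_finite[OF assms]
    by (intro negligible_Union finite_imageI) (auto intro: negligible_countable countable_cis_eq)
  finally show ?thesis .
qed

section \<open>Orthogonal projection for a real semi-inner product on polynomials\<close>

definition real_subspace :: "complex poly set \<Rightarrow> bool" where
  "real_subspace S \<longleftrightarrow> 0 \<in> S \<and> (\<forall>p\<in>S. \<forall>q\<in>S. p + q \<in> S)
     \<and> (\<forall>a. \<forall>p\<in>S. smult (complex_of_real a) p \<in> S)"

lemma real_subspace_diff:
  assumes "real_subspace S" "p \<in> S" "q \<in> S"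
  shows "p - q \<in> S"
proof -
  have "p + smult (complex_of_real (-1)) q \<in> S"
    using assms unfolding real_subspace_def by blast
  then show ?thesis by simp
qed

locale poly_semi_inner =
  fixes B :: "complex poly \<Rightarrow> complex poly \<Rightarrow> real"
  assumes add_left: "B (p + q) r = B p r + B q r"
    and smult_left: "B (smult (complex_of_real a) p) q = a * B p q"
    and commute: "B p q = B q p"
    and nonneg: "0 \<le> B p p"
begin

lemma diff_left: "B (p - q) r = B p r - B q r"
  using add_left[of p "smult (complex_of_real (-1)) q" r] smult_left[of "-1" q r] by simp

lemma add_right: "B r (p + q) = B r p + B r q"
  using add_left commute by metis

lemma diff_right: "B r (p - q) = B r p - B r q"
  using diff_left commute by metis

lemma smult_right: "B q (smult (complex_of_real a) p) = a * B q p"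
  using smult_left commute by metis

lemma zero_right: "B q 0 = 0"
  using diff_right[of q 0 0] by simp

lemma eq_0_if_self_eq_0:
  assumes "B u u = 0"
  shows "B r u = 0"
proof (rule ccontr)
  assume ne: "B r u \<noteq> 0"
  define s where "s = (B r r + 1) / (2 * B r u)"
  have "0 \<le> B (r - smult (complex_of_real s) u) (r - smult (complex_of_real s) u)"
    by (rule nonneg)
  also have "\<dots> = B r r - 2 * s * B r u + s * s * B u u"
    by (simp add: diff_left diff_right smult_left smult_right commute[of u r] algebra_simps)
  also have "\<dots> = -1"
    using ne assms by (simp add: s_def field_simps)
  finally show False by simp
qed

definition has_orth_proj :: "complex poly set \<Rightarrow> bool" where
  "has_orth_proj S \<longleftrightarrow> (\<forall>x. \<exists>y\<in>S. \<forall>s\<in>S. B (x - y) s = 0)"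

text \<open>One Gram--Schmidt step: \<open>T\<close> is the kernel of \<open>\<phi>\<close> plus the line through \<open>v\<close>.\<close>
lemma has_orth_proj_extend:
  assumes T: "real_subspace T" and v: "v \<in> T" "\<phi> v = 1"
    and \<phi>: "\<And>t a. t \<in> T \<Longrightarrow> \<phi> (t - smult (complex_of_real a) v) = \<phi> t - a"
    and proj: "has_orth_proj {t \<in> T. \<phi> t = 0}"
  shows "has_orth_proj T"
  unfolding has_orth_proj_def
proof
  fix x
  let ?S = "{t \<in> T. \<phi> t = 0}"
  obtain y where y: "y \<in> ?S" "\<And>s. s \<in> ?S \<Longrightarrow> B (x - y) s = 0"
    using proj unfolding has_orth_proj_def by blast
  obtain z where z: "z \<in> ?S" "\<And>s. s \<in> ?S \<Longrightarrow> B (v - z) s = 0"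
    using proj unfolding has_orth_proj_def by blast
  define u where "u = v - z"
  define c where "c = B (x - y) u / B u u"
  define r where "r = x - y - smult (complex_of_real c) u"
  have uT: "u \<in> T"
    using real_subspace_diff[OF T v(1)] z(1) by (simp add: u_def)
  have "B r u = B (x - y) u - c * B u u"
    by (simp only: r_def diff_left smult_left)
  then have r_u: "B r u = 0"
    using eq_0_if_self_eq_0[of u "x - y"] by (cases "B u u = 0") (simp_all add: c_def)
  have r_S: "B r s = 0" if "s \<in> ?S" for s
    using y(2)[OF that] z(2)[OF that] by (simp add: r_def u_def diff_left smult_left)
  have r_v: "B r v = 0"
    using r_u r_S[OF z(1)] by (simp add: u_def diff_right)
  show "\<exists>y'\<in>T. \<forall>t\<in>T. B (x - y') t = 0"
  proof (intro bexI ballI)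
    fix t assume t: "t \<in> T"
    have "t - smult (complex_of_real (\<phi> t)) v \<in> ?S"
      using t v \<phi>[OF t] T by (auto simp: real_subspace_def intro: real_subspace_diff)
    then have "B r (t - smult (complex_of_real (\<phi> t)) v) = 0"
      by (rule r_S)
    then have "B r t = B r (smult (complex_of_real (\<phi> t)) v)"
      by (simp add: diff_right)
    then show "B (x - (y + smult (complex_of_real c) u)) t = 0"
      using r_v by (simp add: r_def smult_right algebra_simps)
  next
    show "y + smult (complex_of_real c) u \<in> T"
      using T y(1) uT unfolding real_subspace_def by blast
  qed
qed

lemma coset_pythagoras:
  assumes S: "real_subspace S" "has_orth_proj S"
  obtains r where "r - x \<in> S" "\<And>q. q - x \<in> S \<Longrightarrow> B q q = B r r + B (q - r) (q - r)"
proof -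
  obtain y where y: "y \<in> S" "\<And>s. s \<in> S \<Longrightarrow> B (x - y) s = 0"
    using S(2) unfolding has_orth_proj_def by blast
  have "(x - y) - x \<in> S"
    using real_subspace_diff[OF S(1), of 0 y] y(1) S(1) by (simp add: real_subspace_def)
  moreover have "B q q = B (x - y) (x - y) + B (q - (x - y)) (q - (x - y))"
    if q: "q - x \<in> S" for q
  proof -
    have "q - (x - y) \<in> S"
      using q y(1) S(1) unfolding real_subspace_def by (metis diff_diff_eq2 diff_add_eq)
    then have orth: "B (x - y) (q - (x - y)) = 0" by (rule y(2))
    have "B q q = B ((x - y) + (q - (x - y))) ((x - y) + (q - (x - y)))"
      by simp
    also have "\<dots> = B (x - y) (x - y) + B (q - (x - y)) (q - (x - y))"
      unfolding add_left add_right using orth commute[of "q - (x - y)" "x - y"] by simp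
    finally show ?thesis .
  qed
  ultimately show ?thesis by (rule that)
qed

end

definition Qn0 :: "nat \<Rightarrow> complex poly set" where
  "Qn0 n = {w. degree w \<le> n \<and> poly w 1 = 0}"

lemma real_subspace_Qn0: "real_subspace (Qn0 n)"
  unfolding real_subspace_def Qn0_def
  by (auto intro: order.trans[OF degree_add_le] order.trans[OF degree_smult_le])

lemma Qn0_eq_top_coeff_0: "Qn0 n = {t \<in> Qn0 (Suc n). coeff t (Suc n) = 0}"
proof -
  have "degree t \<le> n" if deg: "degree t \<le> Suc n" and top: "coeff t (Suc n) = 0"
    for t :: "complex poly"
  proof (rule degree_le, intro allI impI)
    fix i assume "n < i"
    then consider "i = Suc n" | "degree t < i"
      using deg \<open>n < i\<close> by (cases "i = Suc n") auto
    then show "coeff t i = 0"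
      using top coeff_eq_0 by cases auto
  qed
  then show ?thesis
    unfolding Qn0_def by (auto simp: coeff_eq_0)
qed

lemma Qn1_iff_diff_1_Qn0: "q \<in> Qn1 n \<longleftrightarrow> q - 1 \<in> Qn0 n"
proof -
  have "degree (q - 1) \<le> n \<longleftrightarrow> degree q \<le> n"
  proof
    assume "degree (q - 1) \<le> n"
    then show "degree q \<le> n"
      using degree_add_le[of "q - 1" n 1] by simp
  qed (simp add: degree_diff_le)
  then show ?thesis by (simp add: Qn1_def Qn0_def)
qed

context poly_semi_inner
begin

lemma has_orth_proj_Qn0: "has_orth_proj (Qn0 n)"
proof (induction n)
  case 0
  have "Qn0 0 = {0}"
    by (auto simp: Qn0_def elim!: degree_eq_zeroE)
  then show ?case
    by (simp add: has_orth_proj_def zero_right)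
next
  case (Suc n)
  define v :: "complex poly" where "v = monom 1 (Suc n) - 1"
  have v: "v \<in> Qn0 (Suc n)" "coeff v (Suc n) = 1"
    by (auto simp: v_def Qn0_def poly_monom degree_monom_le intro: order.trans[OF degree_diff_le])
  \<comment> \<open>The top coefficient is complex, so two real steps lead from \<open>Qn0 n\<close> to \<open>Qn0 (Suc n)\<close>:
    first its real part is freed, then its imaginary part.\<close>
  define H where "H = {t \<in> Qn0 (Suc n). Im (coeff t (Suc n)) = 0}"
  have H: "real_subspace H"
    using real_subspace_Qn0[of "Suc n"] by (auto simp: H_def real_subspace_def)
  have "{t \<in> H. Re (coeff t (Suc n)) = 0} = Qn0 n"
    by (subst Qn0_eq_top_coeff_0) (auto simp: H_def complex_eq_iff)
  then have "has_orth_proj H"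
    using has_orth_proj_extend[OF H, of v "\<lambda>t. Re (coeff t (Suc n))"] Suc v
    by (auto simp: H_def)
  moreover have "smult \<i> v \<in> Qn0 (Suc n)"
    using real_subspace_Qn0[of "Suc n"] v(1) unfolding Qn0_def
    by (auto intro: order.trans[OF degree_smult_le])
  ultimately show ?case
    using has_orth_proj_extend[OF real_subspace_Qn0[of "Suc n"],
        of "smult \<i> v" "\<lambda>t. Im (coeff t (Suc n))"] v
    by (auto simp: H_def)
qed

end

section \<open>The optimal polynomials and their kernels\<close>

definition weighted_inner :: "(real \<Rightarrow> real) \<Rightarrow> complex poly \<Rightarrow> complex poly \<Rightarrow> real" where
  "weighted_inner f p q = integral {-pi..pi} (\<lambda>t. Re (poly p (cis t) * cnj (poly q (cis t))) * f t)"

lemma energy_cis: "energy f q = integral {-pi..pi} (\<lambda>t. (cmod (poly q (cis t)))\<^sup>2 * f t)"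
  by (simp add: energy_def cis_conv_exp)

lemma energy_eq_weighted_inner: "energy f q = weighted_inner f q q"
  by (simp add: energy_cis weighted_inner_def flip: complex_norm_square)

lemma kernel_cis:
  "kernel f n = (\<lambda>t. (cmod (poly (optpoly f n) (cis t)))\<^sup>2 / sigma2 f n * f t)"
  by (simp add: kernel_def fun_eq_iff cis_conv_exp)

lemma cmod_poly_half_one_plus_cis: "(cmod (poly [:1/2, 1/2:] (cis t)))\<^sup>2 = (1 + cos t) / 2"
proof -
  have "(cmod (poly [:1/2, 1/2:] (cis t)))\<^sup>2 = ((1 + cos t) / 2)\<^sup>2 + (sin t / 2)\<^sup>2"
    by (simp add: cmod_power2 add_divide_distrib)
  also have "\<dots> = (1 + cos t) / 2"
    unfolding power_divide sin_squared_eq by (simp add: power2_eq_square field_simps)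
  finally show ?thesis .
qed

lemma energy_mult_half_one_plus:
  "energy f (p * [:1/2, 1/2:])
     = integral {-pi..pi} (\<lambda>t. (1 + cos t) / 2 * (cmod (poly p (cis t)))\<^sup>2 * f t)"
  unfolding energy_cis poly_mult norm_mult power_mult_distrib cmod_poly_half_one_plus_cis
  by (simp add: mult_ac)

lemma mult_half_one_plus_Qn1:
  assumes "p \<in> Qn1 n"
  shows "p * [:1/2, 1/2:] \<in> Qn1 (Suc n)"
proof -
  have "degree (p * [:1/2, 1/2:]) \<le> degree p + 1"
    using degree_mult_le[of p "[:1/2, 1/2:]"] by simp
  then show ?thesis
    using assms by (simp add: Qn1_def)
qed

locale pos_weight =
  fixes f :: "real \<Rightarrow> real"
  assumes f_nonneg: "\<And>t. t \<in> {-pi..pi} \<Longrightarrow> 0 \<le> f t"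
    and f_integrable: "f integrable_on {-pi..pi}"
    and f_integral_pos: "0 < integral {-pi..pi} f"
begin

lemma absolutely_integrable_mult:
  assumes "continuous_on {-pi..pi} h"
  shows "(\<lambda>t. h t * f t) absolutely_integrable_on {-pi..pi}"
  using assms f_integrable f_nonneg
  by (intro absolutely_integrable_continuous_mult nonnegative_absolutely_integrable_1)

lemma integrable_mult:
  assumes "continuous_on {-pi..pi} h"
  shows "(\<lambda>t. h t * f t) integrable_on {-pi..pi}"
  using absolutely_integrable_mult[OF assms] by (rule set_lebesgue_integral_eq_integral(1))

lemma weighted_inner_integrable:
  "(\<lambda>t. Re (poly p (cis t) * cnj (poly q (cis t))) * f t) integrable_on {-pi..pi}"
  by (intro integrable_mult continuous_intros)

sublocale weighted: poly_semi_inner "weighted_inner f"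
proof
  fix p q r :: "complex poly" and a :: real
  show "weighted_inner f (p + q) r = weighted_inner f p r + weighted_inner f q r"
  proof -
    have "(\<lambda>t. Re (poly (p + q) (cis t) * cnj (poly r (cis t))) * f t)
      = (\<lambda>t. Re (poly p (cis t) * cnj (poly r (cis t))) * f t
            + Re (poly q (cis t) * cnj (poly r (cis t))) * f t)"
      by (simp add: algebra_simps)
    then show ?thesis
      unfolding weighted_inner_def
      by (simp only: integral_add[OF weighted_inner_integrable weighted_inner_integrable])
  qed
  show "weighted_inner f (smult (complex_of_real a) p) q = a * weighted_inner f p q"
    by (simp add: weighted_inner_def mult.assoc)
  show "weighted_inner f p q = weighted_inner f q p"
    unfolding weighted_inner_def by (simp add: algebra_simps)
  show "0 \<le> weighted_inner f p p"
    unfolding weighted_inner_def using f_nonneg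
    by (intro integral_nonneg weighted_inner_integrable) (simp flip: complex_norm_square)
qed

lemma weighted_inner_self_pos:
  assumes "p \<noteq> 0"
  shows "0 < weighted_inner f p p"
proof (rule ccontr)
  define w where "w t = (cmod (poly p (cis t)))\<^sup>2" for t
  assume "\<not> 0 < weighted_inner f p p"
  have "(\<lambda>t. w t * f t) absolutely_integrable_on {-pi..pi}"
    unfolding w_def by (intro absolutely_integrable_mult continuous_intros)
  moreover have "0 \<le> w t * f t" if "t \<in> {-pi..pi}" for t
    using f_nonneg[OF that] by (simp add: w_def)
  moreover have "negligible {t. w t = 0}"
    using negligible_poly_cis_zeros[OF assms] by (simp add: w_def)
  moreover have "integral {-pi..pi} (\<lambda>t. w t * f t) = 0"
    using \<open>\<not> 0 < weighted_inner f p p\<close> weighted.nonneg[of p]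
    by (simp add: w_def weighted_inner_def flip: complex_norm_square)
  ultimately have "integral {-pi..pi} f = 0"
    by (rule integral_eq_0_if_weighted_integral_eq_0)
  with f_integral_pos show False by simp
qed

lemma ex1_optimal_poly: "\<exists>!p. p \<in> Qn1 n \<and> (\<forall>q\<in>Qn1 n. energy f p \<le> energy f q)"
proof -
  obtain r where r: "r - 1 \<in> Qn0 n"
    and decomp: "\<And>q. q - 1 \<in> Qn0 n \<Longrightarrow>
      weighted_inner f q q = weighted_inner f r r + weighted_inner f (q - r) (q - r)"
    using weighted.coset_pythagoras[OF real_subspace_Qn0 weighted.has_orth_proj_Qn0] by blast
  have energy_decomp: "energy f q = energy f r + weighted_inner f (q - r) (q - r)"
    if "q \<in> Qn1 n" for q
    using decomp that by (simp add: energy_eq_weighted_inner Qn1_iff_diff_1_Qn0)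
  have rQ: "r \<in> Qn1 n"
    using r by (simp add: Qn1_iff_diff_1_Qn0)
  show ?thesis
  proof (rule ex1I[of _ r])
    have "energy f r \<le> energy f q" if "q \<in> Qn1 n" for q
      using energy_decomp[OF that] weighted.nonneg[of "q - r"] by linarith
    with rQ show "r \<in> Qn1 n \<and> (\<forall>q\<in>Qn1 n. energy f r \<le> energy f q)"
      by blast
    fix p assume p: "p \<in> Qn1 n \<and> (\<forall>q\<in>Qn1 n. energy f p \<le> energy f q)"
    then have "weighted_inner f (p - r) (p - r) \<le> 0"
      using energy_decomp[of p] rQ by fastforce
    then show "p = r"
      using weighted_inner_self_pos[of "p - r"] by fastforce
  qed
qed

lemma optpoly_Qn1: "optpoly f n \<in> Qn1 n"
  and energy_optpoly_le: "q \<in> Qn1 n \<Longrightarrow> energy f (optpoly f n) \<le> energy f q"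
  using theI'[OF ex1_optimal_poly[of n]] unfolding optpoly_def[symmetric] by blast+

lemma sigma2_eq_energy_optpoly: "sigma2 f n = energy f (optpoly f n)"
  unfolding sigma2_def by (rule cInf_eq_minimum) (use optpoly_Qn1 energy_optpoly_le in auto)

lemma sigma2_pos: "0 < sigma2 f n"
proof -
  have "optpoly f n \<noteq> 0"
    using optpoly_Qn1[of n] by (auto simp: Qn1_def)
  then show ?thesis
    by (simp add: sigma2_eq_energy_optpoly energy_eq_weighted_inner weighted_inner_self_pos)
qed

lemma kernel_nonneg: "t \<in> {-pi..pi} \<Longrightarrow> 0 \<le> kernel f n t"
  using f_nonneg sigma2_pos[of n] by (simp add: kernel_cis)

lemma kernel_absolutely_integrable: "kernel f n absolutely_integrable_on {-pi..pi}"
  using sigma2_pos[of n] unfolding kernel_cis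
  by (intro absolutely_integrable_mult continuous_intros) simp

lemma integral_kernel: "integral {-pi..pi} (kernel f n) = 1"
proof -
  have "kernel f n
      = (\<lambda>t. inverse (sigma2 f n) * ((cmod (poly (optpoly f n) (cis t)))\<^sup>2 * f t))"
    by (simp add: kernel_cis divide_inverse mult_ac)
  then show ?thesis
    using sigma2_pos[of n] by (simp add: sigma2_eq_energy_optpoly energy_cis)
qed

lemma kernel_moment_le:
  "integral {-pi..pi} (\<lambda>t. (1 - cos t) / 2 * kernel f n t)
    \<le> 1 - sigma2 f (Suc n) / sigma2 f n"
proof -
  define \<sigma> where "\<sigma> = sigma2 f n"
  define P where "P t = (cmod (poly (optpoly f n) (cis t)))\<^sup>2" for t
  define E where "E = energy f (optpoly f n * [:1/2, 1/2:])"
  have P_int: "(\<lambda>t. P t * f t) integrable_on {-pi..pi}"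
    and PE_int: "(\<lambda>t. (1 + cos t) / 2 * P t * f t) integrable_on {-pi..pi}"
    unfolding P_def by (intro integrable_mult continuous_intros; simp)+
  have \<sigma>: "integral {-pi..pi} (\<lambda>t. P t * f t) = \<sigma>"
    by (simp add: \<sigma>_def P_def sigma2_eq_energy_optpoly energy_cis)
  have E: "integral {-pi..pi} (\<lambda>t. (1 + cos t) / 2 * P t * f t) = E"
    by (simp only: E_def P_def energy_mult_half_one_plus)
  have "sigma2 f (Suc n) \<le> E"
    unfolding E_def sigma2_eq_energy_optpoly
    by (intro energy_optpoly_le mult_half_one_plus_Qn1 optpoly_Qn1)
  have "(1 - cos t) / 2 * kernel f n t
      = inverse \<sigma> * (P t * f t - (1 + cos t) / 2 * P t * f t)" for t
    unfolding kernel_cis \<sigma>_def P_def by (simp add: field_simps)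
  then have "integral {-pi..pi} (\<lambda>t. (1 - cos t) / 2 * kernel f n t)
      = inverse \<sigma> * integral {-pi..pi} (\<lambda>t. P t * f t - (1 + cos t) / 2 * P t * f t)"
    by (simp only: integral_mult_right)
  also have "\<dots> = inverse \<sigma> * (\<sigma> - E)"
    by (simp only: integral_diff[OF P_int PE_int] \<sigma> E)
  also have "\<dots> = 1 - E / \<sigma>"
    using sigma2_pos[of n] by (simp add: \<sigma>_def field_simps)
  also have "\<dots> \<le> 1 - sigma2 f (Suc n) / \<sigma>"
    using \<open>sigma2 f (Suc n) \<le> E\<close> sigma2_pos[of n] by (simp add: \<sigma>_def divide_right_mono)
  finally show ?thesis by (simp add: \<sigma>_def)
qed

lemma kernel_tail_le:
  assumes \<delta>: "0 < \<delta>" "\<delta> \<le> pi"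
  shows "integral {t \<in> {-pi..pi}. \<delta> \<le> \<bar>t\<bar>} (kernel f n)
    \<le> (1 - sigma2 f (Suc n) / sigma2 f n) / ((1 - cos \<delta>) / 2)"
proof -
  have "cos \<delta> < 1"
    using \<delta> cos_monotone_0_pi[of 0 \<delta>] by simp
  have "(1 - cos \<delta>) / 2 \<le> (1 - cos t) / 2" if "t \<in> {t \<in> {-pi..pi}. \<delta> \<le> \<bar>t\<bar>}" for t
    using that \<delta> cos_monotone_0_pi_le[of \<delta> "\<bar>t\<bar>"] by auto
  moreover have "(\<lambda>t. (1 - cos t) / 2 * kernel f n t) integrable_on {-pi..pi}"
    by (intro set_lebesgue_integral_eq_integral(1) absolutely_integrable_continuous_mult
        kernel_absolutely_integrable continuous_intros) simp
  ultimately have "(1 - cos \<delta>) / 2 * integral {t \<in> {-pi..pi}. \<delta> \<le> \<bar>t\<bar>} (kernel f n)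
      \<le> integral {-pi..pi} (\<lambda>t. (1 - cos t) / 2 * kernel f n t)"
    using kernel_nonneg
    by (intro markov_integral_subset_le kernel_absolutely_integrable tail_sets_lebesgue) auto
  also have "\<dots> \<le> 1 - sigma2 f (Suc n) / sigma2 f n"
    by (rule kernel_moment_le)
  finally show ?thesis
    using \<open>cos \<delta> < 1\<close> by (simp add: pos_le_divide_eq mult.commute)
qed

lemma kernel_tail_nonneg: "0 \<le> integral {t \<in> {-pi..pi}. \<delta> \<le> \<bar>t\<bar>} (kernel f n)"
proof (rule integral_nonneg)
  have "kernel f n absolutely_integrable_on {t \<in> {-pi..pi}. \<delta> \<le> \<bar>t\<bar>}"
    by (rule set_integrable_subset[OF kernel_absolutely_integrable tail_sets_lebesgue]) auto
  then show "kernel f n integrable_on {t \<in> {-pi..pi}. \<delta> \<le> \<bar>t\<bar>}"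
    by (rule set_lebesgue_integral_eq_integral(1))
qed (simp add: kernel_nonneg)

end

theorem lemma5p2:
  fixes f :: "real \<Rightarrow> real"
  assumes nonneg: "\<And>t. t \<in> {-pi..pi} \<Longrightarrow> f t \<ge> 0"
    and integrable: "f integrable_on {-pi..pi}"
    and pos: "integral {-pi..pi} f > 0"
    and ratio: "(\<lambda>n. sigma2 f (Suc n) / sigma2 f n) \<longlonglongrightarrow> 1"
  shows "(\<forall>n. \<forall>t\<in>{-pi..pi}. kernel f n t \<ge> 0)
    \<and> (\<forall>n. integral {-pi..pi} (kernel f n) = 1)
    \<and> (\<forall>\<delta>. 0 < \<delta> \<and> \<delta> \<le> pi \<longrightarrow>
          (\<lambda>n. integral {t\<in>{-pi..pi}. \<delta> \<le> \<bar>t\<bar>} (kernel f n)) \<longlonglongrightarrow> 0)"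
proof -
  interpret pos_weight f
    using nonneg integrable pos by unfold_locales
  have "(\<lambda>n. integral {t\<in>{-pi..pi}. \<delta> \<le> \<bar>t\<bar>} (kernel f n)) \<longlonglongrightarrow> 0"
    if \<delta>: "0 < \<delta>" "\<delta> \<le> pi" for \<delta>
  proof (rule tendsto_sandwich[OF _ _ tendsto_const])
    show "\<forall>\<^sub>F n in sequentially. 0 \<le> integral {t\<in>{-pi..pi}. \<delta> \<le> \<bar>t\<bar>} (kernel f n)"
      by (intro always_eventually allI kernel_tail_nonneg)
    show "\<forall>\<^sub>F n in sequentially. integral {t\<in>{-pi..pi}. \<delta> \<le> \<bar>t\<bar>} (kernel f n)
      \<le> (1 - sigma2 f (Suc n) / sigma2 f n) / ((1 - cos \<delta>) / 2)"
      using kernel_tail_le[OF \<delta>] by simp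
    show "(\<lambda>n. (1 - sigma2 f (Suc n) / sigma2 f n) / ((1 - cos \<delta>) / 2)) \<longlonglongrightarrow> 0"
      using tendsto_diff[OF tendsto_const[of 1] ratio] by (intro tendsto_divide_zero) simp
  qed
  then show ?thesis
    using kernel_nonneg integral_kernel by blast
qed

end
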